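(* For every finite metric space $X$, $\zeta(X;1/8)\le \alpha_X$.
   Context: Let $(X,d)$ be a finite metric space; $B(x,r)$ denotes the ball of radius $r$ about $x$. Random zero sets: given $\Delta,\zeta>0$ and $p\in(0,1)$, $X$ admits a random zero set at scale $\Delta$ which is $\zeta$-spreading with probability $p$ if there is a probability distribution $\mu$ over subsets $Z\subseteq X$ such that for all $x,y\in X$ with $d(x,y)\ge\Delta$, $\mu\{Z: y\in Z \text{ and } d(x,Z)\ge \Delta/\zeta\}\ge p$. $\zeta(X;p)$ is the least $\zeta>0$ such that for every $\Delta>0$, $X$ admits a random zero set at scale $\Delta$ which is $\zeta$-spreading with probability $p$. Padded decompositions: for a partition $P$ of $X$ and $x\in X$, $P(x)$ denotes the element of $P$ containing $x$. An $\alpha$-padded decomposition bundle of $X$ is, for every $\Delta>0$, a random partition $P_\Delta$ of $X$ with distribution $\nu$ such that (1) for every $P$ in the support of $\nu$ and every $C\in P$, $\mathrm{diam}(C)<\Delta$; (2) for every $x\in X$, $\nu\{P: B(x,\Delta/\alpha)\subseteq P(x)\}\ge 1/2$. The modulus of padded decomposability $\alpha_X$ is the largest $\alpha>0$ such that $X$ admits an $\alpha$-padded decomposition bundle. *)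

theory Defs
  imports "HOL-Analysis.Analysis" "HOL-Probability.Probability" "HOL-Library.Disjoint_Sets"
begin

definition finite_metric_space :: "'a set \<Rightarrow> ('a \<Rightarrow> 'a \<Rightarrow> real) \<Rightarrow> bool" where
  "finite_metric_space X d \<longleftrightarrow> Metric_space X d \<and> finite X"

definition setdist_pt :: "('a \<Rightarrow> 'a \<Rightarrow> real) \<Rightarrow> 'a \<Rightarrow> 'a set \<Rightarrow> real" where
  "setdist_pt d x Z = (INF z\<in>Z. d x z)"

definition ball_in :: "'a set \<Rightarrow> ('a \<Rightarrow> 'a \<Rightarrow> real) \<Rightarrow> 'a \<Rightarrow> real \<Rightarrow> 'a set" where
  "ball_in X d x r = Metric_space.mcball X d x r"

definition random_zero_set :: "'a set \<Rightarrow> ('a \<Rightarrow> 'a \<Rightarrow> real) \<Rightarrow> real \<Rightarrow> real \<Rightarrow> real \<Rightarrow> bool" where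
  "random_zero_set X d \<Delta> \<zeta> p \<longleftrightarrow>
     (\<exists>\<mu> :: 'a set pmf. set_pmf \<mu> \<subseteq> Pow X \<and>
        (\<forall>x\<in>X. \<forall>y\<in>X. d x y \<ge> \<Delta> \<longrightarrow>
           measure_pmf.prob \<mu> {Z. y \<in> Z \<and> setdist_pt d x Z \<ge> \<Delta> / \<zeta>} \<ge> p))"

definition zeta_X :: "'a set \<Rightarrow> ('a \<Rightarrow> 'a \<Rightarrow> real) \<Rightarrow> real \<Rightarrow> real" where
  "zeta_X X d p = Inf {\<zeta>. \<zeta> > 0 \<and> (\<forall>\<Delta>>0. random_zero_set X d \<Delta> \<zeta> p)}"

definition cluster :: "'a set set \<Rightarrow> 'a \<Rightarrow> 'a set" where
  "cluster P x = (THE C. C \<in> P \<and> x \<in> C)"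

definition padded_random_partition :: "'a set \<Rightarrow> ('a \<Rightarrow> 'a \<Rightarrow> real) \<Rightarrow> real \<Rightarrow> real \<Rightarrow> 'a set set pmf \<Rightarrow> bool" where
  "padded_random_partition X d \<alpha> \<Delta> \<nu> \<longleftrightarrow>
     (\<forall>P\<in>set_pmf \<nu>. partition_on X P \<and> (\<forall>C\<in>P. \<forall>u\<in>C. \<forall>v\<in>C. d u v < \<Delta>)) \<and>
     (\<forall>x\<in>X. measure_pmf.prob \<nu> {P. ball_in X d x (\<Delta> / \<alpha>) \<subseteq> cluster P x} \<ge> 1/2)"

definition padded_decomposition_bundle :: "'a set \<Rightarrow> ('a \<Rightarrow> 'a \<Rightarrow> real) \<Rightarrow> real \<Rightarrow> bool" where
  "padded_decomposition_bundle X d \<alpha> \<longleftrightarrow>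
     (\<forall>\<Delta>>0. \<exists>\<nu>. padded_random_partition X d \<alpha> \<Delta> \<nu>)"

definition alpha_X :: "'a set \<Rightarrow> ('a \<Rightarrow> 'a \<Rightarrow> real) \<Rightarrow> real" where
  "alpha_X X d = Inf {\<alpha>. \<alpha> > 0 \<and> padded_decomposition_bundle X d \<alpha>}"

end

theory Submission imports Defs begin

text \<open>Given a partition P of X into clusters of diameter less than \<Delta>, colour every cluster
  independently by a fair coin and let Z be the union of the heads-clusters. If d x y \<ge> \<Delta>,
  then x and y lie in different clusters, so with probability 1/4 the cluster of x is tails and
  that of y heads. If moreover the ball B(x, \<Delta>/\<alpha>) lies inside the cluster of x, which happens
  with probability at least 1/2, then Z contains y and misses that ball. Hence an \<alpha>-padded
  random partition yields a random zero set at scale \<Delta> which is \<alpha>-spreading with probability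
  1/8, and every admissible \<alpha> is an admissible \<zeta>. For the comparison of infima the set of
  admissible \<alpha> must be nonempty: in a finite space the trivial partition works at scales above
  the diameter and the partition into points works below it, once \<alpha> exceeds the ratio of the
  diameter to the smallest nonzero distance.\<close>

lemma cluster_eqI:
  assumes "partition_on X P" "C \<in> P" "z \<in> C"
  shows "cluster P z = C"
  unfolding cluster_def
proof (rule the_equality)
  show "C \<in> P \<and> z \<in> C" using assms by auto
  fix C' assume "C' \<in> P \<and> z \<in> C'"
  then show "C' = C" using assms unfolding partition_on_def disjoint_def by blast
qed

lemma cluster_in_partition:
  assumes "partition_on X P" "z \<in> X"
  shows "cluster P z \<in> P" "z \<in> cluster P z"
proof -
  obtain C where "C \<in> P" "z \<in> C" using assms unfolding partition_on_def by blast
  with cluster_eqI[OF assms(1)] show "cluster P z \<in> P" "z \<in> cluster P z" by simp_all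
qed

lemma measure_Pi_pmf_bernoulli_two_coords:
  assumes "finite A" "a \<in> A" "b \<in> A" "a \<noteq> b" "0 \<le> p" "p \<le> 1"
  shows "measure_pmf.prob (Pi_pmf A dflt (\<lambda>_. bernoulli_pmf p)) {\<sigma>. \<not> \<sigma> a \<and> \<sigma> b} = (1 - p) * p"
proof -
  define B where "B c = (if c = a then {False} else if c = b then {True} else UNIV)" for c
  have "{\<sigma>. \<not> \<sigma> a \<and> \<sigma> b} = Pi A B"
    using assms(2-4) by (auto simp: B_def Pi_def)
  then have "measure_pmf.prob (Pi_pmf A dflt (\<lambda>_. bernoulli_pmf p)) {\<sigma>. \<not> \<sigma> a \<and> \<sigma> b}
      = (\<Prod>c\<in>A. measure_pmf.prob (bernoulli_pmf p) (B c))"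
    using measure_Pi_pmf_Pi[OF assms(1)] by simp
  also have "\<dots> = (\<Prod>c\<in>{a, b}. measure_pmf.prob (bernoulli_pmf p) (B c))"
    using assms by (intro prod.mono_neutral_right) (auto simp: B_def)
  also have "\<dots> = (1 - p) * p"
    using assms by (simp add: B_def measure_pmf_single)
  finally show ?thesis .
qed

lemma measure_bind_pmf_ge:
  assumes "measure_pmf.prob p G \<ge> q" "r \<ge> 0"
    and "\<And>x. x \<in> G \<Longrightarrow> x \<in> set_pmf p \<Longrightarrow> measure_pmf.prob (K x) E \<ge> r"
  shows "measure_pmf.prob (bind_pmf p K) E \<ge> q * r"
proof -
  have "ennreal (q * r) \<le> emeasure p G * ennreal r"
    using assms(1,2)
    by (simp add: measure_pmf.emeasure_eq_measure ennreal_mult'[symmetric] mult_right_mono)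
  also have "\<dots> = (\<integral>\<^sup>+x. ennreal r * indicator G x \<partial>p)"
    by (simp add: nn_integral_cmult_indicator mult.commute)
  also have "\<dots> \<le> (\<integral>\<^sup>+x. emeasure (K x) E \<partial>p)"
    using assms(3) by (intro nn_integral_mono_AE AE_pmfI)
      (auto simp: indicator_def measure_pmf.emeasure_eq_measure)
  also have "\<dots> = emeasure (bind_pmf p K) E" by simp
  finally show ?thesis by (simp add: measure_pmf.emeasure_eq_measure ennreal_le_iff)
qed

text \<open>The locale definition of mcball, hence ball_in, is only specified for a metric.\<close>

lemma mem_ball_in_iff:
  "Metric_space X d \<Longrightarrow> z \<in> ball_in X d x r \<longleftrightarrow> x \<in> X \<and> z \<in> X \<and> d x z \<le> r"
  by (simp add: ball_in_def Metric_space.in_mcball)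

definition cluster_union :: "'a set set \<Rightarrow> ('a set \<Rightarrow> bool) \<Rightarrow> 'a set" where
  "cluster_union P \<sigma> = \<Union>{C \<in> P. \<sigma> C}"

lemma cluster_union_subset:
  "partition_on X P \<Longrightarrow> cluster_union P \<sigma> \<subseteq> X"
  unfolding cluster_union_def partition_on_def by blast

lemma mem_cluster_union_iff:
  assumes "partition_on X P" "z \<in> X"
  shows "z \<in> cluster_union P \<sigma> \<longleftrightarrow> \<sigma> (cluster P z)"
  using cluster_eqI[OF assms(1)] cluster_in_partition[OF assms]
  unfolding cluster_union_def by blast

lemma cluster_union_spreading:
  assumes "Metric_space X d" and P: "partition_on X P" and "x \<in> X" "y \<in> X"
    and pad: "ball_in X d x r \<subseteq> cluster P x"
    and "\<not> \<sigma> (cluster P x)" "\<sigma> (cluster P y)"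
  shows "y \<in> cluster_union P \<sigma>" "setdist_pt d x (cluster_union P \<sigma>) \<ge> r"
proof -
  show y: "y \<in> cluster_union P \<sigma>"
    using assms mem_cluster_union_iff[OF P] by blast
  have "d x z > r" if z: "z \<in> cluster_union P \<sigma>" for z
  proof (rule ccontr)
    have "z \<in> X" using z cluster_union_subset[OF P] by blast
    moreover assume "\<not> d x z > r"
    ultimately have "z \<in> cluster P x"
      using pad \<open>x \<in> X\<close> by (auto simp: mem_ball_in_iff[OF assms(1)])
    then have "cluster P z = cluster P x"
      using cluster_eqI[OF P cluster_in_partition(1)[OF P \<open>x \<in> X\<close>]] by blast
    with z \<open>z \<in> X\<close> show False
      using assms mem_cluster_union_iff[OF P] by auto
  qed
  with y show "setdist_pt d x (cluster_union P \<sigma>) \<ge> r"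
    unfolding setdist_pt_def by (intro cINF_greatest) (auto intro: less_imp_le)
qed

lemma random_zero_set_of_padded_random_partition:
  assumes "Metric_space X d" and fin: "finite X" and pr: "padded_random_partition X d \<alpha> \<Delta> \<nu>"
  shows "random_zero_set X d \<Delta> \<alpha> (1/8)"
proof -
  define coins where "coins P = Pi_pmf P False (\<lambda>_. bernoulli_pmf (1/2))" for P :: "'a set set"
  define \<mu> where "\<mu> = bind_pmf \<nu> (\<lambda>P. map_pmf (cluster_union P) (coins P))"
  have part: "partition_on X P" and diam: "\<forall>C\<in>P. \<forall>u\<in>C. \<forall>v\<in>C. d u v < \<Delta>"
    if "P \<in> set_pmf \<nu>" for P
    using pr that unfolding padded_random_partition_def by blast+
  have "set_pmf \<mu> \<subseteq> Pow X"
    using cluster_union_subset[OF part] unfolding \<mu>_def by auto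
  moreover have "measure_pmf.prob \<mu> {Z. y \<in> Z \<and> setdist_pt d x Z \<ge> \<Delta> / \<alpha>} \<ge> 1/2 * (1/4)"
    if x: "x \<in> X" and y: "y \<in> X" and far: "d x y \<ge> \<Delta>" for x y
    unfolding \<mu>_def
  proof (rule measure_bind_pmf_ge)
    show "measure_pmf.prob \<nu> {P. ball_in X d x (\<Delta> / \<alpha>) \<subseteq> cluster P x} \<ge> 1/2"
      using pr x unfolding padded_random_partition_def by blast
  next
    fix P assume pad: "P \<in> {P. ball_in X d x (\<Delta> / \<alpha>) \<subseteq> cluster P x}" and P: "P \<in> set_pmf \<nu>"
    note cx = cluster_in_partition[OF part[OF P] x] and cy = cluster_in_partition[OF part[OF P] y]
    have "cluster P x \<noteq> cluster P y"
      using diam[OF P] cx cy far by force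
    moreover have "finite P"
      using part[OF P] fin by (intro finite_subset[of P "Pow X"]) (auto simp: partition_on_def)
    ultimately have "1/4 = measure_pmf.prob (coins P) {\<sigma>. \<not> \<sigma> (cluster P x) \<and> \<sigma> (cluster P y)}"
      unfolding coins_def using cx cy by (subst measure_Pi_pmf_bernoulli_two_coords) auto
    also have "\<dots> \<le> measure_pmf.prob (coins P)
        (cluster_union P -` {Z. y \<in> Z \<and> setdist_pt d x Z \<ge> \<Delta> / \<alpha>})"
      using cluster_union_spreading[OF assms(1) part[OF P] x y] pad
      by (intro measure_pmf.finite_measure_mono) auto
    finally show "measure_pmf.prob (map_pmf (cluster_union P) (coins P))
        {Z. y \<in> Z \<and> setdist_pt d x Z \<ge> \<Delta> / \<alpha>} \<ge> 1/4"
      by simp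
  qed simp
  ultimately show ?thesis unfolding random_zero_set_def by force
qed

lemma padded_random_partition_return_pmf:
  "padded_random_partition X d \<alpha> \<Delta> (return_pmf P) \<longleftrightarrow>
     partition_on X P \<and> (\<forall>C\<in>P. \<forall>u\<in>C. \<forall>v\<in>C. d u v < \<Delta>) \<and>
     (\<forall>x\<in>X. ball_in X d x (\<Delta> / \<alpha>) \<subseteq> cluster P x)"
  by (auto simp: padded_random_partition_def indicator_def)

lemma padded_trivial_partition:
  assumes "Metric_space X d" "\<forall>u\<in>X. \<forall>v\<in>X. d u v < \<Delta>"
  shows "padded_random_partition X d \<alpha> \<Delta> (return_pmf ({X} - {{}}))"
  unfolding padded_random_partition_return_pmf
proof (intro conjI ballI)
  show P: "partition_on X ({X} - {{}})"
  proof (cases "X = {}")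
    case False
    then show ?thesis using partition_on_space[OF False] by simp
  qed (simp add: partition_on_empty)
  fix x assume "x \<in> X"
  then have "cluster ({X} - {{}}) x = X"
    by (intro cluster_eqI[OF P]) auto
  then show "ball_in X d x (\<Delta> / \<alpha>) \<subseteq> cluster ({X} - {{}}) x"
    using mem_ball_in_iff[OF assms(1)] by blast
next
  fix C u v assume "C \<in> {X} - {{}}" "u \<in> C" "v \<in> C"
  then show "d u v < \<Delta>" using assms(2) by blast
qed

lemma padded_singleton_partition:
  assumes "Metric_space X d" "\<Delta> > 0" "\<forall>u\<in>X. \<forall>v\<in>X. u \<noteq> v \<longrightarrow> \<Delta> / \<alpha> < d u v"
  shows "padded_random_partition X d \<alpha> \<Delta> (return_pmf ((\<lambda>x. {x}) ` X))"
  unfolding padded_random_partition_return_pmf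
proof (intro conjI ballI)
  show "partition_on X ((\<lambda>x. {x}) ` X)" by (rule partition_on_singletons)
  fix x assume "x \<in> X"
  then have "cluster ((\<lambda>x. {x}) ` X) x = {x}"
    by (intro cluster_eqI[OF partition_on_singletons]) auto
  moreover have "z = x" if "z \<in> ball_in X d x (\<Delta> / \<alpha>)" for z
  proof -
    from that have "z \<in> X" "d x z \<le> \<Delta> / \<alpha>"
      using mem_ball_in_iff[OF assms(1)] by auto
    with assms(3) \<open>x \<in> X\<close> show "z = x" by force
  qed
  ultimately show "ball_in X d x (\<Delta> / \<alpha>) \<subseteq> cluster ((\<lambda>x. {x}) ` X) x"
    by blast
next
  fix C u v assume "C \<in> (\<lambda>x. {x}) ` X" "u \<in> C" "v \<in> C"
  then show "d u v < \<Delta>"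
    using assms(2) Metric_space.mdist_zero[OF assms(1)] by auto
qed

lemma finite_metric_space_separated:
  assumes "Metric_space X d" "finite X"
  shows "\<exists>m>0. \<forall>u\<in>X. \<forall>v\<in>X. u \<noteq> v \<longrightarrow> m \<le> d u v"
proof -
  define S where "S = insert 1 (case_prod d ` {(u, v) \<in> X \<times> X. u \<noteq> v})"
  have "finite S"
    using assms(2) unfolding S_def by (auto intro: finite_subset[of _ "X \<times> X"])
  moreover have "\<forall>s\<in>S. s > 0"
    using Metric_space.mdist_pos_less[OF assms(1)] unfolding S_def by auto
  ultimately have "Min S > 0"
    by (simp add: S_def)
  moreover have "Min S \<le> d u v" if "u \<in> X" "v \<in> X" "u \<noteq> v" for u v
  proof -
    have "d u v \<in> S" using that by (force simp: S_def)
    with \<open>finite S\<close> show ?thesis by simp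
  qed
  ultimately show ?thesis by blast
qed

lemma padded_decomposition_bundle_exists:
  assumes ms: "Metric_space X d" and fin: "finite X"
  shows "\<exists>\<alpha>>0. padded_decomposition_bundle X d \<alpha>"
proof -
  obtain m where m: "m > 0" "\<forall>u\<in>X. \<forall>v\<in>X. u \<noteq> v \<longrightarrow> m \<le> d u v"
    using finite_metric_space_separated[OF assms] by blast
  have "bdd_above (case_prod d ` (X \<times> X))"
    using fin by simp
  then obtain D where D: "\<forall>u\<in>X. \<forall>v\<in>X. d u v \<le> D"
    unfolding bdd_above_def by auto
  define \<alpha> where "\<alpha> = (\<bar>D\<bar> + 1) / m"
  have "\<alpha> > 0" using m(1) by (simp add: \<alpha>_def)
  moreover have "padded_decomposition_bundle X d \<alpha>"
    unfolding padded_decomposition_bundle_def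
  proof (intro allI impI)
    fix \<Delta> :: real assume "\<Delta> > 0"
    show "\<exists>\<nu>. padded_random_partition X d \<alpha> \<Delta> \<nu>"
    proof (cases "\<forall>u\<in>X. \<forall>v\<in>X. d u v < \<Delta>")
      case True
      with padded_trivial_partition[OF ms] show ?thesis by blast
    next
      case False
      with D have "\<Delta> < \<bar>D\<bar> + 1" by force
      then have "\<Delta> * m < (\<bar>D\<bar> + 1) * m"
        using m(1) by (rule mult_strict_right_mono)
      then have "\<Delta> / \<alpha> < m"
        using m(1) by (simp add: \<alpha>_def field_simps add_pos_nonneg)
      with m(2) have "\<forall>u\<in>X. \<forall>v\<in>X. u \<noteq> v \<longrightarrow> \<Delta> / \<alpha> < d u v"
        by force
      with padded_singleton_partition[OF ms \<open>\<Delta> > 0\<close>] show ?thesis by blast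
    qed
  qed
  ultimately show ?thesis by blast
qed

theorem fact3p4:
  fixes X :: "'a set" and d :: "'a \<Rightarrow> 'a \<Rightarrow> real"
  assumes "finite_metric_space X d"
  shows "zeta_X X d (1/8) \<le> alpha_X X d"
proof -
  have ms: "Metric_space X d" and fin: "finite X"
    using assms unfolding finite_metric_space_def by auto
  have "{\<alpha>. \<alpha> > 0 \<and> padded_decomposition_bundle X d \<alpha>} \<noteq> {}"
    using padded_decomposition_bundle_exists[OF ms fin] by auto
  moreover have "bdd_below {\<zeta>. \<zeta> > 0 \<and> (\<forall>\<Delta>>0. random_zero_set X d \<Delta> \<zeta> (1/8))}"
    by (rule bdd_belowI[of _ 0]) auto
  moreover have "{\<alpha>. \<alpha> > 0 \<and> padded_decomposition_bundle X d \<alpha>}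
      \<subseteq> {\<zeta>. \<zeta> > 0 \<and> (\<forall>\<Delta>>0. random_zero_set X d \<Delta> \<zeta> (1/8))}"
    using random_zero_set_of_padded_random_partition[OF ms fin]
    unfolding padded_decomposition_bundle_def by blast
  ultimately show ?thesis
    unfolding zeta_X_def alpha_X_def by (rule cInf_superset_mono)
qed

end
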